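(* Let $L=\{a^nb^m : n,m\in\mathbb{N},\ m\le n\}$ over the alphabet $\{a,b\}$. Then $L\in\mathrm{RN}_1$ and $L\notin\mathrm{RH}$, i.e. $L$ is recognised by some (nondeterministic) $1$-VASS under reachability acceptance but by no history-deterministic $k$-VASS (for any $k$) under reachability acceptance.
   Context: Fix a finite alphabet $\Sigma$. A $k$-dimensional vector addition system with states ($k$-VASS) is a tuple $(Q,q_0,F,\delta)$ where $Q$ is a finite set of states, $q_0\in Q$ is initial, $F\subseteq Q$ is the set of accepting states, and $\delta\subseteq Q\times\Sigma\times\mathbb{Z}^k\times Q$ is a finite set of transitions (no $\varepsilon$-transitions). A run on a word $w=a_1\cdots a_n$ is a sequence of transitions $(p_{i-1},a_i,d_i,p_i)$ with $p_0=q_0$ such that the counter vectors $v_0=\vec 0$, $v_i=v_{i-1}+d_i$ all lie in $\mathbb{N}^k$. Under reachability acceptance the run is accepting if $p_n\in F$ and $v_n=\vec 0$. The language is the set of words having an accepting run. A VASS is history-deterministic if there is a resolver, i.e. a function $r$ mapping each finite sequence of transitions and each letter $a$ to a transition labelled $a$, such that for every word $w$ in the language, the sequence of transitions obtained by successively applying $r$ to the letters of $w$ is a run on $w$ (counters stay nonnegative) and is accepting. $\mathrm{RN}_k$ (resp. $\mathrm{RH}_k$) is the class of languages recognised by arbitrary (resp. history-deterministic) $k$-VASS under reachability acceptance, and $\mathrm{RH}=\bigcup_{k\ge1}\mathrm{RH}_k$. *)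

theory Defs
  imports Main
begin

datatype ab = a | b

text \<open>A k-VASS over alphabet 'l with natural-number states.
  A transition (p, x, d, q) goes from p to q reading letter x with update vector d in Z^k
  (represented as an int list of length k).\<close>
record 'l vass =
  states :: "nat set"
  init   :: nat
  final  :: "nat set"
  trans  :: "(nat \<times> 'l \<times> int list \<times> nat) set"
  dim    :: nat

type_synonym 'l transition = "nat \<times> 'l \<times> int list \<times> nat"

definition src :: "'l transition \<Rightarrow> nat" where "src t = fst t"
definition lbl :: "'l transition \<Rightarrow> 'l" where "lbl t = fst (snd t)"
definition upd :: "'l transition \<Rightarrow> int list" where "upd t = fst (snd (snd t))"
definition tgt :: "'l transition \<Rightarrow> nat" where "tgt t = snd (snd (snd t))"

definition wf_vass :: "'l vass \<Rightarrow> bool" where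
  "wf_vass V \<longleftrightarrow> finite (states V) \<and> init V \<in> states V \<and> final V \<subseteq> states V
     \<and> finite (trans V)
     \<and> (\<forall>t\<in>trans V. src t \<in> states V \<and> tgt t \<in> states V \<and> length (upd t) = dim V)"

definition counter :: "'l transition list \<Rightarrow> nat \<Rightarrow> nat \<Rightarrow> int" where
  "counter ts j i = (\<Sum>l<j. upd (ts ! l) ! i)"

definition last_state :: "'l vass \<Rightarrow> 'l transition list \<Rightarrow> nat" where
  "last_state V ts = (if ts = [] then init V else tgt (last ts))"

definition is_run :: "'l vass \<Rightarrow> 'l list \<Rightarrow> 'l transition list \<Rightarrow> bool" where
  "is_run V w ts \<longleftrightarrow> length ts = length w
     \<and> (\<forall>j<length ts. ts ! j \<in> trans V \<and> lbl (ts ! j) = w ! j)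
     \<and> (ts \<noteq> [] \<longrightarrow> src (ts ! 0) = init V)
     \<and> (\<forall>j. Suc j < length ts \<longrightarrow> tgt (ts ! j) = src (ts ! Suc j))
     \<and> (\<forall>j\<le>length ts. \<forall>i<dim V. 0 \<le> counter ts j i)"

definition is_acc_run :: "'l vass \<Rightarrow> 'l list \<Rightarrow> 'l transition list \<Rightarrow> bool" where
  "is_acc_run V w ts \<longleftrightarrow> is_run V w ts \<and> last_state V ts \<in> final V
     \<and> (\<forall>i<dim V. counter ts (length ts) i = 0)"

definition lang :: "'l vass \<Rightarrow> 'l list set" where
  "lang V = {w. \<exists>ts. is_acc_run V w ts}"

definition res_run :: "('l transition list \<Rightarrow> 'l \<Rightarrow> 'l transition) \<Rightarrow> 'l list \<Rightarrow> 'l transition list" where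
  "res_run r w = foldl (\<lambda>ts x. ts @ [r ts x]) [] w"

definition is_resolver :: "'l vass \<Rightarrow> ('l transition list \<Rightarrow> 'l \<Rightarrow> 'l transition) \<Rightarrow> bool" where
  "is_resolver V r \<longleftrightarrow> (\<forall>ts x. r ts x \<in> trans V \<and> lbl (r ts x) = x)
     \<and> (\<forall>w\<in>lang V. is_acc_run V w (res_run r w))"

definition history_deterministic :: "'l vass \<Rightarrow> bool" where
  "history_deterministic V \<longleftrightarrow> (\<exists>r. is_resolver V r)"

definition RN :: "nat \<Rightarrow> 'l list set set" where
  "RN k = {lang V | V. wf_vass V \<and> dim V = k}"

definition RH :: "nat \<Rightarrow> 'l list set set" where
  "RH k = {lang V | V. wf_vass V \<and> dim V = k \<and> history_deterministic V}"

definition L_ab :: "ab list set" where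
  "L_ab = {replicate n a @ replicate m b | n m. m \<le> n}"

end

theory Submission
  imports Defs
begin

text \<open>A 1-VASS recognises \<open>L_ab\<close> by reading the a's in a counting state, where it
  nondeterministically chooses which a's to count, and then decrementing the counter once per b
  in a second state that reads no more a's; reaching zero certifies that there are at most as
  many b's as a's.

  No history-deterministic VASS recognises \<open>L_ab\<close>: every a^n lies in the language, so the
  resolver's run on a^n is accepting and ends in a configuration with all counters zero. By
  pigeonhole two of these configurations coincide, say for m1 < m2. Whether a continuation is a
  run, and whether it accepts, depends only on the configuration it starts from, so the
  resolver's accepting continuation of a^m2 on b^m2 also accepts a^m1 b^m2, which is not in
  \<open>L_ab\<close>.\<close>

abbreviation end_counter :: "'l transition list \<Rightarrow> nat \<Rightarrow> int" where
  "end_counter ts \<equiv> counter ts (length ts)"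

lemma counter_append_le: "j \<le> length ts \<Longrightarrow> counter (ts @ us) j i = counter ts j i"
  unfolding counter_def by (rule sum.cong) (auto simp: nth_append)

lemma end_counter_snoc: "end_counter (ts @ [t]) i = end_counter ts i + upd t ! i"
  by (simp add: counter_def nth_append)

lemma is_run_Nil: "is_run V [] []"
  by (simp add: is_run_def counter_def)

lemma last_state_snoc [simp]: "last_state V (ts @ [t]) = tgt t"
  by (simp add: last_state_def)

lemma is_run_snoc:
  "is_run V (w @ [x]) (ts @ [t]) \<longleftrightarrow>
     is_run V w ts \<and> t \<in> trans V \<and> lbl t = x \<and> src t = last_state V ts
     \<and> (\<forall>i<dim V. 0 \<le> end_counter ts i + upd t ! i)"
proof (cases "length ts = length w")
  case True
  have steps: "(\<forall>j<length (ts @ [t]). (ts @ [t]) ! j \<in> trans V \<and> lbl ((ts @ [t]) ! j) = (w @ [x]) ! j)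
      \<longleftrightarrow> (\<forall>j<length ts. ts ! j \<in> trans V \<and> lbl (ts ! j) = w ! j) \<and> t \<in> trans V \<and> lbl t = x"
    using True by (auto simp: nth_append All_less_Suc)
  have start: "(ts @ [t] \<noteq> [] \<longrightarrow> src ((ts @ [t]) ! 0) = init V)
      \<longleftrightarrow> (ts \<noteq> [] \<longrightarrow> src (ts ! 0) = init V) \<and> (ts = [] \<longrightarrow> src t = init V)"
    by (cases ts) auto
  have chain: "(\<forall>j. Suc j < length (ts @ [t]) \<longrightarrow> tgt ((ts @ [t]) ! j) = src ((ts @ [t]) ! Suc j))
      \<longleftrightarrow> (\<forall>j. Suc j < length ts \<longrightarrow> tgt (ts ! j) = src (ts ! Suc j))
          \<and> (ts \<noteq> [] \<longrightarrow> src t = tgt (last ts))" (is "?l \<longleftrightarrow> ?r")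
  proof
    assume ?l
    then show ?r
      by (auto simp: nth_append last_conv_nth)
  next
    assume ?r
    then show ?l
      by (auto simp: nth_append last_conv_nth less_Suc_eq dest: sym[of "Suc _"])
  qed
  have nonneg: "(\<forall>j\<le>length (ts @ [t]). \<forall>i<dim V. 0 \<le> counter (ts @ [t]) j i)
      \<longleftrightarrow> (\<forall>j\<le>length ts. \<forall>i<dim V. 0 \<le> counter ts j i) \<and> (\<forall>i<dim V. 0 \<le> end_counter ts i + upd t ! i)"
  proof -
    have "(\<forall>j\<le>length (ts @ [t]). \<forall>i<dim V. 0 \<le> counter (ts @ [t]) j i)
        \<longleftrightarrow> (\<forall>j\<le>length ts. \<forall>i<dim V. 0 \<le> counter (ts @ [t]) j i)
            \<and> (\<forall>i<dim V. 0 \<le> end_counter (ts @ [t]) i)"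
      by (auto simp: le_Suc_eq)
    then show ?thesis
      by (simp add: counter_append_le end_counter_snoc[simplified])
  qed
  show ?thesis
    unfolding is_run_def steps start chain nonneg using True
    by (auto simp: last_state_def)
next
  case False
  then show ?thesis by (simp add: is_run_def)
qed

lemma last_state_append_replicate:
  "last_state V (ts @ replicate k t) = (if k = 0 then last_state V ts else tgt t)"
  by (cases k) (simp_all add: last_state_def)

lemma end_counter_append_replicate:
  "end_counter (ts @ replicate k t) i = end_counter ts i + int k * upd t ! i"
proof (induction k)
  case (Suc k)
  then show ?case
    using end_counter_snoc[of "ts @ replicate k t" t i]
    by (simp add: replicate_append_same[symmetric] algebra_simps del: replicate_append_same)
qed simp

lemma is_run_append_loop:
  assumes "is_run V w ts" "t \<in> trans V" "src t = last_state V ts" "tgt t = src t"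
    and "\<forall>j\<le>k. \<forall>i<dim V. 0 \<le> end_counter ts i + int j * upd t ! i"
  shows "is_run V (w @ replicate k (lbl t)) (ts @ replicate k t)"
  using assms(5)
proof (induction k)
  case 0
  then show ?case using assms(1) by simp
next
  case (Suc k)
  have "0 \<le> end_counter (ts @ replicate k t) i + upd t ! i" if "i < dim V" for i
  proof -
    have "0 \<le> end_counter ts i + int (Suc k) * upd t ! i"
      using Suc.prems that by blast
    then show ?thesis
      by (simp only: end_counter_append_replicate) (simp add: algebra_simps)
  qed
  then have "is_run V ((w @ replicate k (lbl t)) @ [lbl t]) ((ts @ replicate k t) @ [t])"
    using Suc assms(2-4) by (subst is_run_snoc) (simp add: last_state_append_replicate)
  then show ?case
    by (simp add: replicate_append_same[symmetric] del: replicate_append_same)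
qed

lemma is_run_append_transfer:
  assumes "is_run V (w2 @ v) (P2 @ S)" "length P2 = length w2" "is_run V w1 P1"
    and "last_state V P1 = last_state V P2" "\<forall>i<dim V. end_counter P1 i = end_counter P2 i"
  shows "is_run V (w1 @ v) (P1 @ S) \<and> last_state V (P1 @ S) = last_state V (P2 @ S)
    \<and> (\<forall>i<dim V. end_counter (P1 @ S) i = end_counter (P2 @ S) i)"
  using assms(1)
proof (induction S arbitrary: v rule: rev_induct)
  case Nil
  then have "v = []"
    using assms(2) by (simp add: is_run_def)
  then show ?case using assms(3-5) by simp
next
  case (snoc t S)
  then have "length v = Suc (length S)"
    using assms(2) by (simp add: is_run_def)
  then obtain v' x where v: "v = v' @ [x]"
    by (metis length_Suc_conv_rev)
  have step: "is_run V (w2 @ v') (P2 @ S) \<and> t \<in> trans V \<and> lbl t = x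
     \<and> src t = last_state V (P2 @ S) \<and> (\<forall>i<dim V. 0 \<le> end_counter (P2 @ S) i + upd t ! i)"
    using snoc.prems v is_run_snoc[of V "w2 @ v'" x "P2 @ S" t] by simp
  with snoc.IH have IH: "is_run V (w1 @ v') (P1 @ S) \<and> last_state V (P1 @ S) = last_state V (P2 @ S)
     \<and> (\<forall>i<dim V. end_counter (P1 @ S) i = end_counter (P2 @ S) i)"
    by blast
  have "is_run V ((w1 @ v') @ [x]) ((P1 @ S) @ [t])"
    using step IH by (subst is_run_snoc) simp
  moreover have "\<forall>i<dim V. end_counter ((P1 @ S) @ [t]) i = end_counter ((P2 @ S) @ [t]) i"
    using IH by (simp only: end_counter_snoc) simp
  moreover have "last_state V ((P1 @ S) @ [t]) = last_state V ((P2 @ S) @ [t])"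
    by (simp only: last_state_snoc)
  ultimately show ?case
    unfolding v by (simp only: append_assoc)
qed

lemma res_run_append: "\<exists>S. res_run r (u @ v) = res_run r u @ S"
proof -
  have "\<exists>S. foldl (\<lambda>ts x. ts @ [r ts x]) acc v = acc @ S" for acc
  proof (induction v arbitrary: acc)
    case (Cons y v)
    then obtain S where "foldl (\<lambda>ts x. ts @ [r ts x]) (acc @ [r acc y]) v = (acc @ [r acc y]) @ S"
      by blast
    then show ?case
      by auto
  qed simp
  then show ?thesis
    by (simp add: res_run_def)
qed

lemma resolver_lang_append_transfer:
  assumes "is_resolver V r" "u1 \<in> lang V" "u2 \<in> lang V" "u2 @ v \<in> lang V"
    and "last_state V (res_run r u1) = last_state V (res_run r u2)"
  shows "u1 @ v \<in> lang V"
proof -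
  obtain S where S: "res_run r (u2 @ v) = res_run r u2 @ S"
    using res_run_append by blast
  have acc_res: "is_acc_run V w (res_run r w)" if "w \<in> lang V" for w
    using assms(1) that by (simp add: is_resolver_def)
  have acc1: "is_acc_run V u1 (res_run r u1)" and acc2: "is_acc_run V u2 (res_run r u2)"
    using acc_res assms(2,3) by blast+
  have acc: "is_acc_run V (u2 @ v) (res_run r u2 @ S)"
    using acc_res[OF assms(4)] S by simp
  have "is_run V (u1 @ v) (res_run r u1 @ S)
    \<and> last_state V (res_run r u1 @ S) = last_state V (res_run r u2 @ S)
    \<and> (\<forall>i<dim V. end_counter (res_run r u1 @ S) i = end_counter (res_run r u2 @ S) i)"
  proof (rule is_run_append_transfer)
    show "is_run V (u2 @ v) (res_run r u2 @ S)" "is_run V u1 (res_run r u1)"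
      using acc acc1 by (simp_all add: is_acc_run_def)
    show "length (res_run r u2) = length u2"
      using acc2 by (simp add: is_acc_run_def is_run_def)
    show "\<forall>i<dim V. end_counter (res_run r u1) i = end_counter (res_run r u2) i"
      using acc1 acc2 by (simp add: is_acc_run_def)
  qed (rule assms(5))
  then have "is_acc_run V (u1 @ v) (res_run r u1 @ S)"
    using acc by (simp add: is_acc_run_def)
  then show ?thesis
    by (auto simp: lang_def)
qed

lemma finite_range_nat_repeat:
  fixes f :: "nat \<Rightarrow> 'a"
  assumes "finite (range f)"
  obtains m1 m2 where "m1 < m2" "f m1 = f m2"
proof -
  obtain m1 where "infinite {m. f m = f m1}"
    using pigeonhole_infinite[OF infinite_UNIV_nat assms] by auto
  then obtain m2 where "m1 < m2" "f m2 = f m1"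
    unfolding finite_nat_set_iff_bounded_le by (auto simp: not_le)
  then show thesis
    using that by simp
qed

lemma replicate_a_append_replicate_b_in_L_ab_iff:
  "replicate n a @ replicate m b \<in> L_ab \<longleftrightarrow> m \<le> n"
proof
  assume "replicate n a @ replicate m b \<in> L_ab"
  then obtain n' m' where eq: "replicate n a @ replicate m b = replicate n' a @ replicate m' b"
    and "m' \<le> n'"
    unfolding L_ab_def by blast
  have "n = n'"
    using arg_cong[OF eq, of "\<lambda>w. length (filter ((=) a) w)"] by simp
  moreover have "m = m'"
    using arg_cong[OF eq, of "\<lambda>w. length (filter ((=) b) w)"] by simp
  ultimately show "m \<le> n"
    using \<open>m' \<le> n'\<close> by simp
qed (auto simp: L_ab_def)

lemma L_ab_notin_RH: "L_ab \<notin> RH k"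
proof
  assume "L_ab \<in> RH k"
  then obtain V r where V: "wf_vass V" "lang V = L_ab" and r: "is_resolver V r"
    unfolding RH_def history_deterministic_def by blast
  have a_in_L: "replicate n a \<in> L_ab" for n
    using replicate_a_append_replicate_b_in_L_ab_iff[of n 0] by simp
  define f where "f n = last_state V (res_run r (replicate n a))" for n
  have "range f \<subseteq> states V"
    using r V a_in_L by (auto simp: f_def is_resolver_def is_acc_run_def wf_vass_def)
  then have "finite (range f)"
    using V(1) finite_subset unfolding wf_vass_def by blast
  then obtain m1 m2 where "m1 < m2" "f m1 = f m2"
    by (rule finite_range_nat_repeat)
  have "replicate m1 a @ replicate m2 b \<in> lang V"
  proof (rule resolver_lang_append_transfer[OF r])
    show "replicate m1 a \<in> lang V" "replicate m2 a \<in> lang V"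
      using a_in_L V(2) by simp_all
    show "replicate m2 a @ replicate m2 b \<in> lang V"
      using V(2) by (simp add: replicate_a_append_replicate_b_in_L_ab_iff)
    show "last_state V (res_run r (replicate m1 a)) = last_state V (res_run r (replicate m2 a))"
      using \<open>f m1 = f m2\<close> by (simp add: f_def)
  qed
  then show False
    using V(2) \<open>m1 < m2\<close> by (simp add: replicate_a_append_replicate_b_in_L_ab_iff)
qed

definition L_ab_vass :: "ab vass" where
  "L_ab_vass = \<lparr>states = {0, 1}, init = 0, final = {0, 1},
     trans = {(0, a, [1], 0), (0, a, [0], 0), (0, b, [-1], 1), (1, b, [-1], 1)}, dim = 1\<rparr>"

lemma L_ab_vass_simps:
  "init L_ab_vass = 0" "final L_ab_vass = {0, 1}" "dim L_ab_vass = 1"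
  "trans L_ab_vass = {(0, a, [1], 0), (0, a, [0], 0), (0, b, [-1], 1), (1, b, [-1], 1)}"
  by (simp_all add: L_ab_vass_def)

lemma wf_L_ab_vass: "wf_vass L_ab_vass"
  by (auto simp: wf_vass_def L_ab_vass_def src_def tgt_def upd_def)

lemma L_ab_vass_run_shape:
  assumes "is_run L_ab_vass w ts"
  shows "\<exists>n m. w = replicate n a @ replicate m b \<and> end_counter ts 0 + int m \<le> int n
    \<and> (last_state L_ab_vass ts = 0 \<longrightarrow> m = 0)"
  using assms
proof (induction w arbitrary: ts rule: rev_induct)
  case Nil
  then have "ts = []"
    by (simp add: is_run_def)
  then show ?case
    by (simp add: counter_def last_state_def L_ab_vass_def)
next
  case (snoc x w)
  then have "length ts = Suc (length w)"
    by (simp add: is_run_def)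
  then obtain ts' t where ts: "ts = ts' @ [t]"
    by (metis length_Suc_conv_rev)
  have step: "is_run L_ab_vass w ts'" "t \<in> trans L_ab_vass" "lbl t = x"
    "src t = last_state L_ab_vass ts'"
    using snoc.prems is_run_snoc[of L_ab_vass w x ts' t] ts by simp_all
  obtain n m where w: "w = replicate n a @ replicate m b"
    and bound: "end_counter ts' 0 + int m \<le> int n"
    and at_0: "last_state L_ab_vass ts' = 0 \<longrightarrow> m = 0"
    using snoc.IH[OF step(1)] by (elim exE conjE)
  have counter_ts: "end_counter ts 0 = end_counter ts' 0 + upd t ! 0"
    and last_ts: "last_state L_ab_vass ts = tgt t"
    using ts end_counter_snoc by simp_all
  consider (read_a) "lbl t = a" "src t = 0" "tgt t = 0" "upd t ! 0 \<le> 1"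
    | (read_b) "lbl t = b" "tgt t = 1" "upd t ! 0 = -1"
    using step(2) by (auto simp: L_ab_vass_def src_def lbl_def tgt_def upd_def)
  then show ?case
  proof cases
    case read_a
    with step at_0 have "m = 0" "x = a"
      by simp_all
    with read_a bound have "w @ [x] = replicate (Suc n) a @ replicate 0 b"
      "end_counter ts 0 + int 0 \<le> int (Suc n)"
      by (simp_all add: w counter_ts replicate_append_same)
    then show ?thesis
      by fastforce
  next
    case read_b
    with step bound have "w @ [x] = replicate n a @ replicate (Suc m) b"
      "end_counter ts 0 + int (Suc m) \<le> int n" "last_state L_ab_vass ts \<noteq> 0"
      by (simp_all add: w counter_ts last_ts replicate_append_same)
    then show ?thesis
      by fastforce
  qed
qed

lemma lang_L_ab_vass_subset: "lang L_ab_vass \<subseteq> L_ab"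
proof
  fix w
  assume "w \<in> lang L_ab_vass"
  then obtain ts where acc: "is_acc_run L_ab_vass w ts"
    unfolding lang_def by blast
  then obtain n m where "w = replicate n a @ replicate m b" "end_counter ts 0 + int m \<le> int n"
    using L_ab_vass_run_shape unfolding is_acc_run_def by blast
  moreover have "end_counter ts 0 = 0"
    using acc by (simp add: is_acc_run_def L_ab_vass_def)
  ultimately show "w \<in> L_ab"
    by (simp add: replicate_a_append_replicate_b_in_L_ab_iff)
qed

lemma L_ab_subset_lang_L_ab_vass: "L_ab \<subseteq> lang L_ab_vass"
proof
  fix w
  assume "w \<in> L_ab"
  then obtain n m where w: "w = replicate n a @ replicate m b" and "m \<le> n"
    unfolding L_ab_def by blast
  define inc skip first_b dec where "inc = (0::nat, a, [1::int], 0::nat)"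
    and "skip = (0::nat, a, [0::int], 0::nat)" and "first_b = (0::nat, b, [-1::int], 1::nat)"
    and "dec = (1::nat, b, [-1::int], 1::nat)"
  note transitions = inc_def skip_def first_b_def dec_def src_def tgt_def lbl_def upd_def
    L_ab_vass_simps
  define ts_a where "ts_a = replicate m inc @ replicate (n - m) skip"
  have run_inc: "is_run L_ab_vass (replicate m a) (replicate m inc)"
    using is_run_append_loop[OF is_run_Nil, of inc L_ab_vass m]
    by (simp add: last_state_def counter_def transitions)
  have counter_inc: "end_counter (replicate m inc) 0 = int m"
    using end_counter_append_replicate[of "[]" m inc 0] by (simp add: counter_def transitions)
  have last_inc: "last_state L_ab_vass (replicate m inc) = 0"
    by (cases m) (simp_all add: last_state_def transitions)
  have "is_run L_ab_vass (replicate m a @ replicate (n - m) a) ts_a"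
    using is_run_append_loop[OF run_inc, of skip "n - m"] counter_inc last_inc
    by (simp add: ts_a_def transitions)
  moreover have "replicate m a @ replicate (n - m) a = replicate n a"
    using \<open>m \<le> n\<close> by (simp flip: replicate_add)
  ultimately have run_a: "is_run L_ab_vass (replicate n a) ts_a"
    by simp
  have counter_a: "end_counter ts_a 0 = int m"
    using counter_inc unfolding ts_a_def by (simp only: end_counter_append_replicate) (simp add: transitions)
  have last_a: "last_state L_ab_vass ts_a = 0"
    using last_inc by (simp add: ts_a_def last_state_append_replicate transitions)
  show "w \<in> lang L_ab_vass"
  proof (cases m)
    case 0
    then have "is_acc_run L_ab_vass w ts_a"
      using run_a counter_a last_a w by (simp add: is_acc_run_def transitions)
    then show ?thesis
      unfolding lang_def by blast
  next
    case (Suc m')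
    have run_b: "is_run L_ab_vass (replicate n a @ [b]) (ts_a @ [first_b])"
      using run_a counter_a last_a Suc
      by (subst is_run_snoc) (simp add: transitions)
    have counter_b: "end_counter (ts_a @ [first_b]) 0 = int m'"
      using counter_a Suc by (simp only: end_counter_snoc) (simp add: transitions)
    have "is_run L_ab_vass ((replicate n a @ [b]) @ replicate m' b) ((ts_a @ [first_b]) @ replicate m' dec)"
      using is_run_append_loop[OF run_b, of dec m'] counter_b
      by (simp add: transitions)
    moreover have "end_counter ((ts_a @ [first_b]) @ replicate m' dec) 0 = 0"
      using counter_b by (simp only: end_counter_append_replicate) (simp add: transitions)
    moreover have "last_state L_ab_vass ((ts_a @ [first_b]) @ replicate m' dec) = 1"
      by (simp only: last_state_append_replicate) (simp add: transitions)
    ultimately have "is_acc_run L_ab_vass w ((ts_a @ [first_b]) @ replicate m' dec)"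
      using w Suc by (simp add: is_acc_run_def transitions replicate_append_same)
    then show ?thesis
      unfolding lang_def by blast
  qed
qed

theorem mainTheorem5:
  shows "L_ab \<in> RN 1 \<and> L_ab \<notin> (\<Union>k\<in>{k. k \<ge> 1}. RH k)"
proof
  have "lang L_ab_vass = L_ab"
    using lang_L_ab_vass_subset L_ab_subset_lang_L_ab_vass by blast
  then show "L_ab \<in> RN 1"
    using wf_L_ab_vass L_ab_vass_simps(3) unfolding RN_def by blast
  show "L_ab \<notin> (\<Union>k\<in>{k. k \<ge> 1}. RH k)"
    using L_ab_notin_RH by blast
qed

end
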